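(* Let $R$ be a commutative local ring and $s\in U(R)$. Then the ring $M_2(R;s)$ is not strongly $J$-clean.
   Context: A commutative ring $R$ is local if it has a unique maximal ideal $J(R)$ (its Jacobson radical); $U(R)$ is the group of units. For $s\in R$, $M_2(R;s)$ denotes the ring whose elements are the $2\times 2$ arrays $\left[\begin{smallmatrix} a&b\\ c&d\end{smallmatrix}\right]$ with $a,b,c,d\in R$, with componentwise addition and multiplication $\left[\begin{smallmatrix} a&b\\ c&d\end{smallmatrix}\right]\left[\begin{smallmatrix} a'&b'\\ c'&d'\end{smallmatrix}\right]=\left[\begin{smallmatrix} aa'+s^2bc'&ab'+bd'\\ ca'+dc'&s^2cb'+dd'\end{smallmatrix}\right]$. An element $a$ of a ring $T$ is strongly $J$-clean if there is an idempotent $e\in T$ with $ae=ea$ and $a-e\in J(T)$; a ring is strongly $J$-clean if all its elements are. *)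

theory Defs
  imports "HOL-Algebra.Algebra"
begin

definition local_ring :: "('a, 'b) ring_scheme \<Rightarrow> bool" where
  "local_ring R \<longleftrightarrow> cring R \<and> (\<exists>!M. maximalideal M R)"

text \<open>The ring M_2(R;s): 2x2 arrays (a,b,c,d) = [[a,b],[c,d]] with componentwise
  addition and the twisted multiplication
  [[a,b],[c,d]] [[a',b'],[c',d']] = [[aa' + s^2 bc', ab' + bd'],[ca' + dc', s^2 cb' + dd']].\<close>
definition M2 :: "('a, 'b) ring_scheme \<Rightarrow> 'a \<Rightarrow> ('a \<times> 'a \<times> 'a \<times> 'a) ring" where
  "M2 R s = \<lparr> carrier = {(a, b, c, d). a \<in> carrier R \<and> b \<in> carrier R \<and> c \<in> carrier R \<and> d \<in> carrier R},
     monoid.mult = (\<lambda>(a, b, c, d) (a', b', c', d').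
        (a \<otimes>\<^bsub>R\<^esub> a' \<oplus>\<^bsub>R\<^esub> (s [^]\<^bsub>R\<^esub> (2::nat)) \<otimes>\<^bsub>R\<^esub> b \<otimes>\<^bsub>R\<^esub> c',
         a \<otimes>\<^bsub>R\<^esub> b' \<oplus>\<^bsub>R\<^esub> b \<otimes>\<^bsub>R\<^esub> d',
         c \<otimes>\<^bsub>R\<^esub> a' \<oplus>\<^bsub>R\<^esub> d \<otimes>\<^bsub>R\<^esub> c',
         (s [^]\<^bsub>R\<^esub> (2::nat)) \<otimes>\<^bsub>R\<^esub> c \<otimes>\<^bsub>R\<^esub> b' \<oplus>\<^bsub>R\<^esub> d \<otimes>\<^bsub>R\<^esub> d')),
     monoid.one = (\<one>\<^bsub>R\<^esub>, \<zero>\<^bsub>R\<^esub>, \<zero>\<^bsub>R\<^esub>, \<one>\<^bsub>R\<^esub>),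
     ring.zero = (\<zero>\<^bsub>R\<^esub>, \<zero>\<^bsub>R\<^esub>, \<zero>\<^bsub>R\<^esub>, \<zero>\<^bsub>R\<^esub>),
     ring.add = (\<lambda>(a, b, c, d) (a', b', c', d').
        (a \<oplus>\<^bsub>R\<^esub> a', b \<oplus>\<^bsub>R\<^esub> b', c \<oplus>\<^bsub>R\<^esub> c', d \<oplus>\<^bsub>R\<^esub> d')) \<rparr>"

definition left_ideal :: "'a set \<Rightarrow> ('a, 'b) ring_scheme \<Rightarrow> bool" where
  "left_ideal I T \<longleftrightarrow> additive_subgroup I T \<and>
     (\<forall>a \<in> carrier T. \<forall>x \<in> I. a \<otimes>\<^bsub>T\<^esub> x \<in> I)"

definition maximal_left_ideal :: "'a set \<Rightarrow> ('a, 'b) ring_scheme \<Rightarrow> bool" where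
  "maximal_left_ideal I T \<longleftrightarrow> left_ideal I T \<and> I \<noteq> carrier T \<and>
     (\<forall>K. left_ideal K T \<and> I \<subseteq> K \<longrightarrow> K = I \<or> K = carrier T)"

definition jacobson_radical :: "('a, 'b) ring_scheme \<Rightarrow> 'a set" where
  "jacobson_radical T = carrier T \<inter> \<Inter> {I. maximal_left_ideal I T}"

definition strongly_J_clean_elem :: "('a, 'b) ring_scheme \<Rightarrow> 'a \<Rightarrow> bool" where
  "strongly_J_clean_elem T a \<longleftrightarrow>
     (\<exists>e \<in> carrier T. e \<otimes>\<^bsub>T\<^esub> e = e \<and> a \<otimes>\<^bsub>T\<^esub> e = e \<otimes>\<^bsub>T\<^esub> a
        \<and> a \<ominus>\<^bsub>T\<^esub> e \<in> jacobson_radical T)"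

definition strongly_J_clean :: "('a, 'b) ring_scheme \<Rightarrow> bool" where
  "strongly_J_clean T \<longleftrightarrow> (\<forall>a \<in> carrier T. strongly_J_clean_elem T a)"

end

theory Submission
  imports Defs
begin

text \<open>The element \<open>N = [[0,1],[0,0]]\<close> is not strongly J-clean. Since \<open>s\<close> is a unit, an
  idempotent commuting with \<open>N\<close> is forced to be scalar, \<open>e = x\<cdot>1\<close> with \<open>x\<^sup>2 = x\<close>, so the upper
  right entry of \<open>N - e\<close> is \<open>1\<close>. On the other hand, for a maximal ideal \<open>m\<close> of \<open>R\<close> the matrices
  whose second column lies in \<open>m\<close> form a maximal left ideal of \<open>M\<^sub>2(R;s)\<close>; it contains the
  Jacobson radical but not \<open>N - e\<close>.\<close>

lemma M2_carrier_iff [simp]: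
  "(a, b, c, d) \<in> carrier (M2 R s) \<longleftrightarrow>
     a \<in> carrier R \<and> b \<in> carrier R \<and> c \<in> carrier R \<and> d \<in> carrier R"
  by (simp add: M2_def)

lemma M2_mult [simp]:
  "(a, b, c, d) \<otimes>\<^bsub>M2 R s\<^esub> (a', b', c', d') =
     (a \<otimes>\<^bsub>R\<^esub> a' \<oplus>\<^bsub>R\<^esub> (s [^]\<^bsub>R\<^esub> (2::nat)) \<otimes>\<^bsub>R\<^esub> b \<otimes>\<^bsub>R\<^esub> c',
      a \<otimes>\<^bsub>R\<^esub> b' \<oplus>\<^bsub>R\<^esub> b \<otimes>\<^bsub>R\<^esub> d',
      c \<otimes>\<^bsub>R\<^esub> a' \<oplus>\<^bsub>R\<^esub> d \<otimes>\<^bsub>R\<^esub> c',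
      (s [^]\<^bsub>R\<^esub> (2::nat)) \<otimes>\<^bsub>R\<^esub> c \<otimes>\<^bsub>R\<^esub> b' \<oplus>\<^bsub>R\<^esub> d \<otimes>\<^bsub>R\<^esub> d')"
  by (simp add: M2_def)

lemma M2_add [simp]:
  "(a, b, c, d) \<oplus>\<^bsub>M2 R s\<^esub> (a', b', c', d') =
     (a \<oplus>\<^bsub>R\<^esub> a', b \<oplus>\<^bsub>R\<^esub> b', c \<oplus>\<^bsub>R\<^esub> c', d \<oplus>\<^bsub>R\<^esub> d')"
  by (simp add: M2_def)

lemma M2_one [simp]: "\<one>\<^bsub>M2 R s\<^esub> = (\<one>\<^bsub>R\<^esub>, \<zero>\<^bsub>R\<^esub>, \<zero>\<^bsub>R\<^esub>, \<one>\<^bsub>R\<^esub>)"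
  by (simp add: M2_def)

lemma M2_zero [simp]: "\<zero>\<^bsub>M2 R s\<^esub> = (\<zero>\<^bsub>R\<^esub>, \<zero>\<^bsub>R\<^esub>, \<zero>\<^bsub>R\<^esub>, \<zero>\<^bsub>R\<^esub>)"
  by (simp add: M2_def)

definition M2_col2_in :: "('a, 'b) ring_scheme \<Rightarrow> 'a set \<Rightarrow> ('a \<times> 'a \<times> 'a \<times> 'a) set" where
  "M2_col2_in R I = {(a, b, c, d). a \<in> carrier R \<and> b \<in> I \<and> c \<in> carrier R \<and> d \<in> I}"

lemma jacobson_radical_subset_maximal_left_ideal:
  "maximal_left_ideal I T \<Longrightarrow> jacobson_radical T \<subseteq> I"
  by (auto simp: jacobson_radical_def)

lemma left_ideal_subset: "left_ideal K T \<Longrightarrow> K \<subseteq> carrier T"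
  by (auto simp: left_ideal_def additive_subgroup_def dest: subgroup.mem_carrier)

lemma left_ideal_zero_closed: "left_ideal K T \<Longrightarrow> \<zero>\<^bsub>T\<^esub> \<in> K"
  using subgroup.one_closed by (fastforce simp: left_ideal_def additive_subgroup_def)

lemma left_ideal_add_closed:
  "left_ideal K T \<Longrightarrow> x \<in> K \<Longrightarrow> y \<in> K \<Longrightarrow> x \<oplus>\<^bsub>T\<^esub> y \<in> K"
  using subgroup.m_closed by (fastforce simp: left_ideal_def additive_subgroup_def)

lemma left_ideal_mult_closed:
  "left_ideal K T \<Longrightarrow> A \<in> carrier T \<Longrightarrow> x \<in> K \<Longrightarrow> A \<otimes>\<^bsub>T\<^esub> x \<in> K"
  by (simp add: left_ideal_def)

lemma (in maximalideal) one_notin: "\<one> \<notin> I"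
  using I_notcarr one_imp_carrier by blast

context ring
begin

lemma M2_a_inv [simp]:
  assumes "a \<in> carrier R" "b \<in> carrier R" "c \<in> carrier R" "d \<in> carrier R"
  shows "\<ominus>\<^bsub>M2 R s\<^esub> (a, b, c, d) = (\<ominus> a, \<ominus> b, \<ominus> c, \<ominus> d)"
proof -
  have the_a_inv: "(THE y. y \<in> carrier R \<and> x \<oplus> y = \<zero> \<and> y \<oplus> x = \<zero>) = \<ominus> x" for x
    by (simp add: a_inv_def m_inv_def)
  show ?thesis
    unfolding a_inv_def m_inv_def
  proof (rule the_equality, goal_cases)
    case 1
    show ?case
      using assms by (simp add: M2_def the_a_inv r_neg l_neg)
  next
    case (2 y)
    with assms show ?case
      by (cases y) (auto simp: the_a_inv minus_equality[symmetric])
  qed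
qed

lemma M2_a_minus [simp]:
  assumes "a \<in> carrier R" "b \<in> carrier R" "c \<in> carrier R" "d \<in> carrier R"
    and "a' \<in> carrier R" "b' \<in> carrier R" "c' \<in> carrier R" "d' \<in> carrier R"
  shows "(a, b, c, d) \<ominus>\<^bsub>M2 R s\<^esub> (a', b', c', d') = (a \<ominus> a', b \<ominus> b', c \<ominus> c', d \<ominus> d')"
  using assms by (simp add: a_minus_def)

lemma M2_r_one:
  assumes "s \<in> carrier R" "A \<in> carrier (M2 R s)"
  shows "A \<otimes>\<^bsub>M2 R s\<^esub> \<one>\<^bsub>M2 R s\<^esub> = A"
  using assms by (cases A) simp

lemma M2_col2_in_left_ideal:
  assumes "s \<in> carrier R" "ideal I R"
  shows "left_ideal (M2_col2_in R I) (M2 R s)"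
proof -
  interpret I: ideal I R by fact
  have "subgroup (M2_col2_in R I) (add_monoid (M2 R s))"
  proof (rule subgroup.intro)
    show "M2_col2_in R I \<subseteq> carrier (add_monoid (M2 R s))"
      by (auto simp: M2_col2_in_def I.Icarr)
    show "x \<otimes>\<^bsub>add_monoid (M2 R s)\<^esub> y \<in> M2_col2_in R I"
      if "x \<in> M2_col2_in R I" "y \<in> M2_col2_in R I" for x y
      using that by (auto simp: M2_col2_in_def I.a_closed)
    show "\<one>\<^bsub>add_monoid (M2 R s)\<^esub> \<in> M2_col2_in R I"
      by (simp add: M2_col2_in_def I.zero_closed)
    show "inv\<^bsub>add_monoid (M2 R s)\<^esub> x \<in> M2_col2_in R I" if "x \<in> M2_col2_in R I" for x
    proof -
      have "inv\<^bsub>add_monoid (M2 R s)\<^esub> x = \<ominus>\<^bsub>M2 R s\<^esub> x"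
        by (simp add: a_inv_def)
      with that show ?thesis
        by (auto simp: M2_col2_in_def I.Icarr I.a_inv_closed)
    qed
  qed
  moreover have "A \<otimes>\<^bsub>M2 R s\<^esub> B \<in> M2_col2_in R I"
    if "A \<in> carrier (M2 R s)" "B \<in> M2_col2_in R I" for A B
    using that assms(1) by (cases A, cases B)
      (auto simp: M2_col2_in_def I.Icarr I.a_closed I.I_l_closed)
  ultimately show ?thesis
    by (simp add: left_ideal_def additive_subgroup_def)
qed

end

context cring
begin

lemma M2_corner_ideal:
  assumes "s \<in> carrier R" and K: "left_ideal K (M2 R s)"
  shows "ideal {x \<in> carrier R. (\<zero>, \<zero>, \<zero>, x) \<in> K} R" (is "ideal ?I R")
proof -
  have scalar: "r \<otimes> x \<in> ?I" if "r \<in> carrier R" "x \<in> ?I" for r x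
  proof -
    have "(\<zero>, \<zero>, \<zero>, r) \<otimes>\<^bsub>M2 R s\<^esub> (\<zero>, \<zero>, \<zero>, x) \<in> K"
      using that by (intro left_ideal_mult_closed[OF K]) auto
    with that assms(1) show ?thesis
      by simp
  qed
  show ?thesis
  proof (rule idealI)
    show "subgroup ?I (add_monoid R)"
    proof (rule subgroup.intro)
      show "?I \<subseteq> carrier (add_monoid R)"
        by auto
      show "x \<otimes>\<^bsub>add_monoid R\<^esub> y \<in> ?I" if "x \<in> ?I" "y \<in> ?I" for x y
        using left_ideal_add_closed[OF K, of "(\<zero>, \<zero>, \<zero>, x)" "(\<zero>, \<zero>, \<zero>, y)"] that
        by simp
      show "\<one>\<^bsub>add_monoid R\<^esub> \<in> ?I"
        using left_ideal_zero_closed[OF K] by simp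
      show "inv\<^bsub>add_monoid R\<^esub> x \<in> ?I" if "x \<in> ?I" for x
        using scalar[of "\<ominus> \<one>" x] that by (simp add: l_minus a_inv_def[symmetric])
    qed
    show "\<And>a x. a \<in> ?I \<Longrightarrow> x \<in> carrier R \<Longrightarrow> x \<otimes> a \<in> ?I"
      by (rule scalar)
    then show "\<And>a x. a \<in> ?I \<Longrightarrow> x \<in> carrier R \<Longrightarrow> a \<otimes> x \<in> ?I"
      by (metis (no_types, lifting) m_comm mem_Collect_eq)
  qed (rule ring_axioms)
qed

lemma M2_left_ideal_above_col2_in:
  assumes s: "s \<in> Units R" and m: "maximalideal m R"
    and K: "left_ideal K (M2 R s)" "M2_col2_in R m \<subseteq> K" "K \<noteq> M2_col2_in R m"
  shows "K = carrier (M2 R s)"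
proof -
  interpret m: maximalideal m R by fact
  have sc: "s \<in> carrier R" and s2: "s [^] (2::nat) \<in> Units R"
    using s by (auto simp: Units_pow_closed)
  obtain a b c d where Q: "(a, b, c, d) \<in> K" "(a, b, c, d) \<notin> M2_col2_in R m"
    using K(2,3) by (metis prod_cases4 subsetI subset_antisym)
  have abcd: "a \<in> carrier R" "b \<in> carrier R" "c \<in> carrier R" "d \<in> carrier R"
    using left_ideal_subset[OF K(1)] Q(1) by auto
  have "(\<ominus> a, \<zero>, \<ominus> c, \<zero>) \<in> K"
    using K(2) abcd by (auto simp: M2_col2_in_def m.zero_closed)
  from left_ideal_add_closed[OF K(1) Q(1) this]
  have Q': "(\<zero>, b, \<zero>, d) \<in> K"
    using abcd by (simp add: r_neg)
  define I where "I = {x \<in> carrier R. (\<zero>, \<zero>, \<zero>, x) \<in> K}"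
  have I: "ideal I R"
    unfolding I_def using sc K(1) by (rule M2_corner_ideal)
  have "m \<subseteq> I"
    using K(2) m.Icarr by (auto simp: I_def M2_col2_in_def m.zero_closed)
  moreover have "\<not> I \<subseteq> m"
  proof -
    have "(\<zero>, \<zero>, \<zero>, \<one>) \<otimes>\<^bsub>M2 R s\<^esub> (\<zero>, b, \<zero>, d) \<in> K"
      by (rule left_ideal_mult_closed[OF K(1) _ Q']) simp
    then have d: "d \<in> I"
      using abcd sc by (simp add: I_def)
    \<comment> \<open>the twist \<open>s\<^sup>2\<close> in the product is undone by the unit \<open>inv (s\<^sup>2)\<close>\<close>
    have "(\<zero>, \<zero>, inv (s [^] (2::nat)), \<zero>) \<otimes>\<^bsub>M2 R s\<^esub> (\<zero>, b, \<zero>, d) \<in> K"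
      using s2 by (intro left_ideal_mult_closed[OF K(1) _ Q']) auto
    moreover have "s [^] (2::nat) \<otimes> inv (s [^] (2::nat)) \<otimes> b = b"
      using s2 abcd by simp
    ultimately have "b \<in> I"
      using abcd sc Units_inv_closed[OF s2] by (simp add: I_def)
    moreover have "b \<notin> m \<or> d \<notin> m"
      using Q(2) abcd by (auto simp: M2_col2_in_def)
    ultimately show ?thesis
      using d by blast
  qed
  ultimately have "I = carrier R"
    using m.I_maximal[OF I] by (auto simp: I_def)
  then have "(\<one>, \<zero>, \<zero>, \<zero>) \<oplus>\<^bsub>M2 R s\<^esub> (\<zero>, \<zero>, \<zero>, \<one>) \<in> K"
    using K(2) by (intro left_ideal_add_closed[OF K(1)])
      (auto simp: I_def M2_col2_in_def m.zero_closed)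
  then have one: "\<one>\<^bsub>M2 R s\<^esub> \<in> K"
    by simp
  have "A \<in> K" if "A \<in> carrier (M2 R s)" for A
    using left_ideal_mult_closed[OF K(1) that one] by (simp only: M2_r_one[OF sc that])
  then show ?thesis
    using left_ideal_subset[OF K(1)] by blast
qed

lemma M2_col2_in_maximal_left_ideal:
  assumes s: "s \<in> Units R" and m: "maximalideal m R"
  shows "maximal_left_ideal (M2_col2_in R m) (M2 R s)"
  unfolding maximal_left_ideal_def
proof (intro conjI allI impI)
  interpret m: maximalideal m R by fact
  show "left_ideal (M2_col2_in R m) (M2 R s)"
    using M2_col2_in_left_ideal[OF Units_closed[OF s] m.is_ideal] .
  have "(\<zero>, \<one>, \<zero>, \<zero>) \<notin> M2_col2_in R m"
    using m.one_notin by (simp add: M2_col2_in_def)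
  moreover have "(\<zero>, \<one>, \<zero>, \<zero>) \<in> carrier (M2 R s)"
    by simp
  ultimately show "M2_col2_in R m \<noteq> carrier (M2 R s)"
    by blast
  show "K = M2_col2_in R m \<or> K = carrier (M2 R s)"
    if "left_ideal K (M2 R s) \<and> M2_col2_in R m \<subseteq> K" for K
    using M2_left_ideal_above_col2_in[OF s m] that by blast
qed

lemma idem_mult_add_eq_imp_zero:
  assumes "x \<in> carrier R" "y \<in> carrier R" "x \<otimes> x = x" "x \<otimes> y \<oplus> y \<otimes> x = y"
  shows "y = \<zero>"
proof -
  have y: "y = x \<otimes> y \<oplus> x \<otimes> y"
    using assms by (simp add: m_comm)
  have "x \<otimes> y = (x \<otimes> x) \<otimes> y \<oplus> (x \<otimes> x) \<otimes> y"
    using assms(1,2) by (subst y) (simp add: r_distr m_assoc)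
  then have "x \<otimes> y = y"
    using y assms(3) by simp
  then have "y \<oplus> y = y"
    using y by simp
  then show ?thesis
    using add.l_cancel_one[OF assms(2) assms(2)] by blast
qed

lemma M2_idem_commuting_upper_unit_is_scalar:
  assumes s: "s \<in> Units R" and e: "e \<in> carrier (M2 R s)" "e \<otimes>\<^bsub>M2 R s\<^esub> e = e"
    and comm: "(\<zero>, \<one>, \<zero>, \<zero>) \<otimes>\<^bsub>M2 R s\<^esub> e = e \<otimes>\<^bsub>M2 R s\<^esub> (\<zero>, \<one>, \<zero>, \<zero>)"
  shows "\<exists>x \<in> carrier R. e = (x, \<zero>, \<zero>, x)"
proof -
  obtain x y z w where e_def: "e = (x, y, z, w)"
    by (cases e)
  have xyzw: "x \<in> carrier R" "y \<in> carrier R" "z \<in> carrier R" "w \<in> carrier R"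
    using e(1) by (auto simp: e_def)
  have sc: "s \<in> carrier R" and s2: "s [^] (2::nat) \<in> Units R"
    using s by (auto simp: Units_pow_closed)
  have "(\<zero>, \<one>, \<zero>, \<zero>) \<otimes>\<^bsub>M2 R s\<^esub> e = (s [^] (2::nat) \<otimes> z, w, \<zero>, \<zero>)"
    "e \<otimes>\<^bsub>M2 R s\<^esub> (\<zero>, \<one>, \<zero>, \<zero>) = (\<zero>, x, \<zero>, s [^] (2::nat) \<otimes> z)"
    using xyzw sc by (simp_all add: e_def)
  with comm have "s [^] (2::nat) \<otimes> z = \<zero>" and w: "w = x"
    by (metis prod.inject)+
  then have z: "z = \<zero>"
    using s2 xyzw(3) by (metis Units_closed Units_l_cancel r_null zero_closed)
  have "e \<otimes>\<^bsub>M2 R s\<^esub> e = (x \<otimes> x, x \<otimes> y \<oplus> y \<otimes> x, \<zero>, x \<otimes> x)"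
    using xyzw sc by (simp add: e_def z w)
  with e(2) have "x \<otimes> x = x" "x \<otimes> y \<oplus> y \<otimes> x = y"
    unfolding e_def z w by (metis prod.inject)+
  with xyzw have "y = \<zero>"
    by (intro idem_mult_add_eq_imp_zero)
  with xyzw(1) show ?thesis
    by (simp add: e_def z w)
qed

end

theorem corollary2p10:
  fixes R :: "('a, 'b) ring_scheme" and s :: 'a
  assumes "local_ring R"
    and "s \<in> Units R"
  shows "\<not> strongly_J_clean (M2 R s)"
proof
  assume "strongly_J_clean (M2 R s)"
  have R: "cring R" and "\<exists>!m. maximalideal m R"
    using assms(1) unfolding local_ring_def by auto
  then obtain m where m: "maximalideal m R"
    by auto
  interpret cring R by fact
  let ?N = "(\<zero>\<^bsub>R\<^esub>, \<one>\<^bsub>R\<^esub>, \<zero>\<^bsub>R\<^esub>, \<zero>\<^bsub>R\<^esub>)"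
  have "strongly_J_clean_elem (M2 R s) ?N"
    using \<open>strongly_J_clean (M2 R s)\<close> unfolding strongly_J_clean_def by simp
  then obtain e where e: "e \<in> carrier (M2 R s)" "e \<otimes>\<^bsub>M2 R s\<^esub> e = e"
    "?N \<otimes>\<^bsub>M2 R s\<^esub> e = e \<otimes>\<^bsub>M2 R s\<^esub> ?N" and J: "?N \<ominus>\<^bsub>M2 R s\<^esub> e \<in> jacobson_radical (M2 R s)"
    unfolding strongly_J_clean_elem_def by blast
  obtain x where x: "x \<in> carrier R" and e_scalar: "e = (x, \<zero>\<^bsub>R\<^esub>, \<zero>\<^bsub>R\<^esub>, x)"
    using M2_idem_commuting_upper_unit_is_scalar[OF assms(2) e] by blast
  have "?N \<ominus>\<^bsub>M2 R s\<^esub> e \<in> M2_col2_in R m"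
    using J jacobson_radical_subset_maximal_left_ideal
      M2_col2_in_maximal_left_ideal[OF assms(2) m] by blast
  then show False
    using x maximalideal.one_notin[OF m] by (simp add: e_scalar M2_col2_in_def a_minus_def)
qed

end
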